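(* Let $A$ be an essential Banach algebra and $X$ a Banach $A$-bimodule. Then for all integers $n\geq 3$, $Mul_{n-1}(A,X)=Mul_{n}(A,X)$. In particular $Mul_{2}(A,X)=Mul_{n}(A,X)$ for all $n\geq 2$.
   Context: A Banach algebra $A$ is essential if $\overline{A^2}=A$, where $A^2=\mathrm{span}\{ab:a,b\in A\}$. For $n\ge 2$, a bounded linear map $T:A\to X$ is an $n$-multiplier if $T(a_1\cdots a_n)=a_1\cdot T(a_2\cdots a_n)=T(a_1\cdots a_{n-1})\cdot a_n$ for all $a_i\in A$; $Mul_n(A,X)$ is the set of all $n$-multipliers from $A$ into $X$. *)

theory Defs
  imports "HOL-Analysis.Analysis"
begin

fun prodl :: "'a::semigroup_mult list \<Rightarrow> 'a" where
  "prodl [] = undefined"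
| "prodl [x] = x"
| "prodl (x # y # xs) = x * prodl (y # xs)"

definition essential :: "'a::{real_normed_algebra,banach} itself \<Rightarrow> bool" where
  "essential _ \<longleftrightarrow> closure (span {a * b | a b :: 'a. True}) = UNIV"

definition banach_bimodule ::
  "('a::{real_normed_algebra,banach} \<Rightarrow> 'x::banach \<Rightarrow> 'x) \<Rightarrow> ('x \<Rightarrow> 'a \<Rightarrow> 'x) \<Rightarrow> bool" where
  "banach_bimodule lm rm \<longleftrightarrow>
     bounded_bilinear lm \<and> bounded_bilinear rm \<and>
     (\<forall>a b x. lm (a * b) x = lm a (lm b x)) \<and>
     (\<forall>a b x. rm x (a * b) = rm (rm x a) b) \<and>
     (\<forall>a b x. rm (lm a x) b = lm a (rm x b))"

definition Mul ::
  "nat \<Rightarrow> ('a::{real_normed_algebra,banach} \<Rightarrow> 'x::banach \<Rightarrow> 'x) \<Rightarrow> ('x \<Rightarrow> 'a \<Rightarrow> 'x)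
    \<Rightarrow> ('a \<Rightarrow> 'x) set" where
  "Mul n lm rm = {T. bounded_linear T \<and>
     (\<forall>a as. length as = n - 1 \<longrightarrow> T (prodl (a # as)) = lm a (T (prodl as))) \<and>
     (\<forall>as b. length as = n - 1 \<longrightarrow> T (prodl (as @ [b])) = rm (T (prodl as)) b)}"

end

theory Submission
  imports Defs
begin

(*
  Raising, Mul m <= Mul (m+1), needs no hypothesis on A: any product of m+1
  factors is also a product of m factors (merge two adjacent factors that
  are not involved in the multiplier identity), so the identities for m
  factors already give those for m+1 factors.

  Lowering, Mul (m+1) <= Mul m, uses essentiality. Fixing all but the last
  (resp. first) factor, the defect T(a a_2...a_m) - a.T(a_2...a_m) is a
  bounded linear function of that factor which vanishes on products c*d,
  since replacing it by c,d gives an identity for m+1 factors. A bounded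
  linear map vanishing on all products vanishes on the closed span of the
  products, which is all of A.
*)

lemma prodl_append_two:
  "prodl (xs @ [c, d]) = prodl (xs @ [c * (d::'a::semigroup_mult)])"
  by (induction xs rule: prodl.induct) simp_all

lemma prodl_Cons_two:
  "prodl (c # d # xs) = prodl ((c * (d::'a::semigroup_mult)) # xs)"
  by (cases xs) (simp_all add: mult.assoc)

lemma prodl_snoc:
  "prodl (ys @ [x]) = (if ys = [] then x else prodl ys * (x::'a::semigroup_mult))"
  by (induction ys rule: prodl.induct) (simp_all add: mult.assoc)

lemma prodl_Cons:
  "prodl (x # ys) = (if ys = [] then x else (x::'a::semigroup_mult) * prodl ys)"
  by (cases ys) simp_all

lemma bounded_linear_prodl_last:
  "bounded_linear (\<lambda>x. prodl (ys @ [x::'a::real_normed_algebra]))"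
  unfolding prodl_snoc
  by (cases "ys = []") (auto intro: bounded_linear_ident bounded_linear_mult_right)

lemma bounded_linear_prodl_first:
  "bounded_linear (\<lambda>x. prodl ((x::'a::real_normed_algebra) # ys))"
  unfolding prodl_Cons
  by (cases "ys = []") (auto intro: bounded_linear_ident bounded_linear_mult_left)

text \<open>The kernel of a bounded linear map is a closed subspace, so it contains
  the closed span of every set on which the map vanishes.\<close>

lemma bounded_linear_zero_on_closure_span:
  assumes "bounded_linear f" and "\<And>x. x \<in> S \<Longrightarrow> f x = 0" and "y \<in> closure (span S)"
  shows "f y = 0"
proof -
  interpret f: bounded_linear f by fact
  have "subspace {x. f x = 0}"
    unfolding subspace_def by (simp add: f.add f.scaleR f.zero)
  with assms(2) have "span S \<subseteq> {x. f x = 0}"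
    by (intro span_minimal) auto
  moreover have "closed {x. f x = 0}"
    by (intro closed_Collect_eq continuous_intros f.continuous_on)
  ultimately have "closure (span S) \<subseteq> {x. f x = 0}"
    by (rule closure_minimal)
  with assms(3) show ?thesis by auto
qed

lemma essential_bounded_linear_eq_zero:
  fixes f :: "'a::{real_normed_algebra,banach} \<Rightarrow> 'x::real_normed_vector"
  assumes "essential TYPE('a)" and "bounded_linear f" and "\<And>c d. f (c * d) = 0"
  shows "f y = 0"
  using bounded_linear_zero_on_closure_span[OF assms(2), of "{a * b | a b :: 'a. True}" y]
    assms(1,3)
  unfolding essential_def by auto

text \<open>Every m-multiplier is an (m+1)-multiplier, for any actions whatsoever:
  two adjacent factors away from the acting one are merged.\<close>

lemma Mul_imp_Mul_Suc:
  assumes "m \<ge> 2" and "T \<in> Mul m lm rm"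
  shows "T \<in> Mul (Suc m) lm rm"
proof -
  have lin: "bounded_linear T"
    and left: "\<And>a as. length as = m - 1 \<Longrightarrow> T (prodl (a # as)) = lm a (T (prodl as))"
    and right: "\<And>as b. length as = m - 1 \<Longrightarrow> T (prodl (as @ [b])) = rm (T (prodl as)) b"
    using assms(2) unfolding Mul_def by auto
  have "T (prodl (a # as)) = lm a (T (prodl as))" if "length as = m" for a as
  proof -
    from that assms(1) obtain bs c d where as: "as = bs @ [c, d]"
      by (cases as rule: rev_cases; cases "butlast as" rule: rev_cases) auto
    have "T (prodl (a # as)) = T (prodl (a # bs @ [c * d]))"
      using prodl_append_two[of "a # bs" c d] by (simp add: as)
    also have "\<dots> = lm a (T (prodl (bs @ [c * d])))"
      using left[of "bs @ [c * d]" a] that as by simp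
    also have "\<dots> = lm a (T (prodl as))"
      by (simp add: as prodl_append_two)
    finally show ?thesis .
  qed
  moreover have "T (prodl (as @ [b])) = rm (T (prodl as)) b" if "length as = m" for as b
  proof -
    from that assms(1) obtain cs c d where as: "as = c # d # cs"
      by (cases as; cases "tl as") auto
    have "T (prodl (as @ [b])) = T (prodl ((c * d) # cs @ [b]))"
      using prodl_Cons_two[of c d "cs @ [b]"] by (simp only: as append_Cons)
    also have "\<dots> = rm (T (prodl ((c * d) # cs))) b"
      using right[of "(c * d) # cs" b] that as by simp
    also have "\<dots> = rm (T (prodl as)) b"
      using prodl_Cons_two[of c d cs] by (simp only: as)
    finally show ?thesis .
  qed
  ultimately show ?thesis
    unfolding Mul_def using lin by auto
qed

text \<open>Conversely, over an essential algebra with bounded bilinear actions every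
  (m+1)-multiplier is an m-multiplier: the defect of each identity is a bounded
  linear function of the outermost free factor that vanishes on products.\<close>

lemma Mul_Suc_imp_Mul:
  fixes lm :: "'a::{real_normed_algebra,banach} \<Rightarrow> 'x::banach \<Rightarrow> 'x"
  assumes ess: "essential TYPE('a)"
    and lm: "bounded_bilinear lm" and rm: "bounded_bilinear rm"
    and "m \<ge> 2" and "T \<in> Mul (Suc m) lm rm"
  shows "T \<in> Mul m lm rm"
proof -
  have lin: "bounded_linear T"
    and left: "\<And>a as. length as = m \<Longrightarrow> T (prodl (a # as)) = lm a (T (prodl as))"
    and right: "\<And>as b. length as = m \<Longrightarrow> T (prodl (as @ [b])) = rm (T (prodl as)) b"
    using assms(5) unfolding Mul_def by auto
  have "T (prodl (a # as)) = lm a (T (prodl as))" if "length as = m - 1" for a as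
  proof -
    from that assms(4) obtain bs x where as: "as = bs @ [x]"
      by (cases as rule: rev_cases) auto
    define defect where
      "defect y = T (prodl ((a # bs) @ [y])) - lm a (T (prodl (bs @ [y])))" for y
    have "bounded_linear defect"
      unfolding defect_def
      by (intro bounded_linear_sub bounded_linear_compose[OF lin] bounded_linear_prodl_last
          bounded_linear_compose[OF bounded_bilinear.bounded_linear_right[OF lm]])
    moreover have "defect (c * d) = 0" for c d
      using left[of "bs @ [c, d]" a] that as
      by (simp add: defect_def prodl_append_two flip: prodl_append_two[of "a # bs", simplified])
    ultimately have "defect x = 0"
      using essential_bounded_linear_eq_zero[OF ess] by blast
    then show ?thesis by (simp add: defect_def as)
  qed
  moreover have "T (prodl (as @ [b])) = rm (T (prodl as)) b" if "length as = m - 1" for as b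
  proof -
    from that assms(4) obtain cs x where as: "as = x # cs"
      by (cases as) auto
    define defect where
      "defect y = T (prodl (y # cs @ [b])) - rm (T (prodl (y # cs))) b" for y
    have "bounded_linear defect"
      unfolding defect_def
      by (intro bounded_linear_sub bounded_linear_compose[OF lin] bounded_linear_prodl_first
          bounded_linear_compose[OF bounded_bilinear.bounded_linear_left[OF rm]])
    moreover have "defect (c * d) = 0" for c d
      using right[of "c # d # cs" b] that as prodl_Cons_two[of c d "cs @ [b]"]
        prodl_Cons_two[of c d cs]
      by (simp add: defect_def)
    ultimately have "defect x = 0"
      using essential_bounded_linear_eq_zero[OF ess] by blast
    then show ?thesis by (simp add: defect_def as)
  qed
  ultimately show ?thesis
    unfolding Mul_def using lin by auto
qed

text \<open>Hence multipliers of consecutive orders m, m+1 coincide for m >= 2; the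
  bimodule axioms are only needed for the boundedness of the two actions.\<close>

lemma Mul_eq_Mul_Suc:
  assumes "essential TYPE('a::{real_normed_algebra,banach})"
    and "banach_bimodule (lm :: 'a \<Rightarrow> 'x::banach \<Rightarrow> 'x) rm" and "m \<ge> 2"
  shows "Mul m lm rm = Mul (Suc m) lm rm"
  using Mul_imp_Mul_Suc[OF assms(3)] Mul_Suc_imp_Mul[OF assms(1) _ _ assms(3)] assms(2)
  unfolding banach_bimodule_def by blast

theorem theorem2p4:
  fixes lm :: "'a::{real_normed_algebra,banach} \<Rightarrow> 'x::banach \<Rightarrow> 'x"
    and rm :: "'x \<Rightarrow> 'a \<Rightarrow> 'x"
  assumes "essential TYPE('a)"
    and "banach_bimodule lm rm"
  shows "(\<forall>n::nat. n \<ge> 3 \<longrightarrow> Mul (n - 1) lm rm = Mul n lm rm)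
       \<and> (\<forall>n::nat. n \<ge> 2 \<longrightarrow> Mul 2 lm rm = Mul n lm rm)"
proof -
  have consecutive: "Mul m lm rm = Mul (Suc m) lm rm" if "m \<ge> 2" for m
    using Mul_eq_Mul_Suc[OF assms that] .
  have "Mul 2 lm rm = Mul n lm rm" if "n \<ge> 2" for n
    using that
  proof (induction n rule: dec_induct)
    case (step k)
    then show ?case using consecutive[of k] by simp
  qed simp
  moreover have "Mul (n - 1) lm rm = Mul n lm rm" if "n \<ge> 3" for n
    using consecutive[of "n - 1"] that by (simp add: Suc_diff_1)
  ultimately show ?thesis by blast
qed

end
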